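(* Let $n\ge2$ and $\Delta\subset B_n$ a proper ideal such that for every $A\subseteq[1,n]$, $A\in\Delta$ if and only if $[1,n]\setminus A\notin\Delta$. Then $\mathrm{Bier}(B_n,\Delta)$ is centrally symmetric, with involution exchanging the vertex $([\{x\}],[1,n])$-type vertex $(\{x\},[1,n])$ and the vertex $(\emptyset,[1,n]\setminus\{x\})$ for each $x\in[1,n]$.
   Context: $B_n$ is the Boolean lattice of subsets of $[1,n]$. A proper ideal $\Delta\subset B_n$ is a nonempty family of subsets of $[1,n]$ closed under taking subsets with $[1,n]\notin\Delta$. The Bier sphere $\mathrm{Bier}(B_n,\Delta)$ is the simplicial complex whose faces are the pairs $(B,C)$ with $B\subsetneq C\subseteq[1,n]$, $B\in\Delta$, $C\notin\Delta$, with $(B',C')$ a face of $(B,C)$ iff $B'\subseteq B$ and $C\subseteq C'$; its vertices are the pairs $(\{x\},[1,n])$ with $\{x\}\in\Delta$ and $(\emptyset,[1,n]\setminus\{x\})$ with $[1,n]\setminus\{x\}\notin\Delta$. A simplicial complex $\Gamma$ with vertex set $V$ is centrally symmetric if there is a fixed-point-free involution $\alpha$ of $V$ such that $\alpha(F)$ is a face for every face $F$, and $\{v,\alpha(v)\}$ is not a face for every $v\in V$. *)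

theory Defs
  imports Main
begin

definition proper_ideal :: "nat \<Rightarrow> nat set set \<Rightarrow> bool" where
  "proper_ideal n \<Delta> \<longleftrightarrow> \<Delta> \<noteq> {} \<and> \<Delta> \<subseteq> Pow {1..n}
     \<and> (\<forall>A\<in>\<Delta>. \<forall>B. B \<subseteq> A \<longrightarrow> B \<in> \<Delta>) \<and> {1..n} \<notin> \<Delta>"

text \<open>Faces of Bier(B_n, Delta) as pairs (B,C).\<close>
definition bier_pairs :: "nat \<Rightarrow> nat set set \<Rightarrow> (nat set \<times> nat set) set" where
  "bier_pairs n \<Delta> = {(B, C). B \<subset> C \<and> C \<subseteq> {1..n} \<and> B \<in> \<Delta> \<and> C \<notin> \<Delta>}"

definition bier_vertices :: "nat \<Rightarrow> nat set set \<Rightarrow> (nat set \<times> nat set) set" where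
  "bier_vertices n \<Delta> =
     {({x}, {1..n}) | x. x \<in> {1..n} \<and> {x} \<in> \<Delta>}
   \<union> {({}, {1..n} - {x}) | x. x \<in> {1..n} \<and> {1..n} - {x} \<notin> \<Delta>}"

definition bier_vertex_set :: "nat \<Rightarrow> nat set set \<Rightarrow> nat set \<times> nat set \<Rightarrow> (nat set \<times> nat set) set" where
  "bier_vertex_set n \<Delta> F = {v \<in> bier_vertices n \<Delta>. fst v \<subseteq> fst F \<and> snd F \<subseteq> snd v}"

definition bier_complex :: "nat \<Rightarrow> nat set set \<Rightarrow> (nat set \<times> nat set) set set" where
  "bier_complex n \<Delta> = bier_vertex_set n \<Delta> ` bier_pairs n \<Delta>"

definition centrally_symmetric_via :: "'v set \<Rightarrow> 'v set set \<Rightarrow> ('v \<Rightarrow> 'v) \<Rightarrow> bool" where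
  "centrally_symmetric_via V K \<alpha> \<longleftrightarrow>
     (\<forall>v\<in>V. \<alpha> v \<in> V \<and> \<alpha> (\<alpha> v) = v \<and> \<alpha> v \<noteq> v)
   \<and> (\<forall>F\<in>K. \<alpha> ` F \<in> K)
   \<and> (\<forall>v\<in>V. {v, \<alpha> v} \<notin> K)"

end

theory Submission
  imports Defs
begin

text \<open>Self-duality of \<open>\<Delta>\<close> says that \<open>(B, C) \<mapsto> ([1,n] - C, [1,n] - B)\<close> maps faces of
  \<open>Bier(B\<^sub>n, \<Delta>)\<close> to faces. A face \<open>(B, C)\<close> has the vertices \<open>({x}, [1,n])\<close> for \<open>x \<in> B\<close>
  and \<open>(\<emptyset>, [1,n] - {x})\<close> for \<open>x \<notin> C\<close>, so on vertex sets this map is induced by exchanging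
  these two kinds of vertices. Two such vertices with the same \<open>x\<close> never lie in a common
  face, as that would require \<open>x \<in> B \<subseteq> C \<subseteq> [1,n] - {x}\<close>.\<close>

definition self_dual :: "nat \<Rightarrow> nat set set \<Rightarrow> bool" where
  "self_dual n \<Delta> \<longleftrightarrow> (\<forall>A \<subseteq> {1..n}. A \<in> \<Delta> \<longleftrightarrow> {1..n} - A \<notin> \<Delta>)"

definition bier_antipode :: "nat \<Rightarrow> nat set \<times> nat set \<Rightarrow> nat set \<times> nat set" where
  "bier_antipode n v =
     (if fst v = {} then ({1..n} - snd v, {1..n}) else ({}, {1..n} - fst v))"

text \<open>Not declared \<open>simp\<close>: the simplifier first rewrites \<open>{1..n}\<close> to \<open>{Suc 0..n}\<close>
  (via \<open>One_nat_def\<close>), so these two rules are applied explicitly.\<close>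

lemma bier_antipode_singleton:
  "bier_antipode n ({x}, {1..n}) = ({}, {1..n} - {x})"
  by (simp add: bier_antipode_def)

lemma bier_antipode_cosingleton:
  "x \<in> {1..n} \<Longrightarrow> bier_antipode n ({}, {1..n} - {x}) = ({x}, {1..n})"
  by (auto simp: bier_antipode_def)

lemma self_dualD:
  "self_dual n \<Delta> \<Longrightarrow> A \<subseteq> {1..n} \<Longrightarrow> A \<in> \<Delta> \<longleftrightarrow> {1..n} - A \<notin> \<Delta>"
  unfolding self_dual_def by blast

lemma self_dual_cosingleton:
  assumes "self_dual n \<Delta>" and "x \<in> {1..n}"
  shows "{1..n} - {x} \<notin> \<Delta> \<longleftrightarrow> {x} \<in> \<Delta>"
  using self_dualD[OF assms(1), of "{x}"] assms(2) by simp

lemma bier_vertices_self_dual: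
  assumes "self_dual n \<Delta>"
  shows "bier_vertices n \<Delta> =
           {({x}, {1..n}) | x. x \<in> {1..n} \<and> {x} \<in> \<Delta>}
         \<union> {({}, {1..n} - {x}) | x. x \<in> {1..n} \<and> {x} \<in> \<Delta>}"
  using self_dual_cosingleton[OF assms] unfolding bier_vertices_def by blast

lemma bier_antipode_vertex:
  assumes "self_dual n \<Delta>" and "v \<in> bier_vertices n \<Delta>"
  shows "bier_antipode n v \<in> bier_vertices n \<Delta>"
    and "bier_antipode n (bier_antipode n v) = v"
    and "bier_antipode n v \<noteq> v"
proof -
  from assms obtain x where x: "x \<in> {1..n}" "{x} \<in> \<Delta>"
    and v: "v = ({x}, {1..n}) \<or> v = ({}, {1..n} - {x})"
    unfolding bier_vertices_self_dual[OF assms(1)] by blast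
  have "({x}, {1..n}) \<in> bier_vertices n \<Delta>" "({}, {1..n} - {x}) \<in> bier_vertices n \<Delta>"
    using x unfolding bier_vertices_self_dual[OF assms(1)] by blast+
  with v show "bier_antipode n v \<in> bier_vertices n \<Delta>"
    and "bier_antipode n (bier_antipode n v) = v"
    and "bier_antipode n v \<noteq> v"
    using bier_antipode_singleton[of n x] bier_antipode_cosingleton[OF x(1)] by auto
qed

lemma bier_vertex_set_eq:
  assumes "proper_ideal n \<Delta>" and "(B, C) \<in> bier_pairs n \<Delta>"
  shows "bier_vertex_set n \<Delta> (B, C) =
           (\<lambda>x. ({x}, {1..n})) ` B \<union> (\<lambda>x. ({}, {1..n} - {x})) ` ({1..n} - C)"
    (is "_ = ?rhs")
proof -
  from assms(2) have face: "B \<subset> C" "C \<subseteq> {1..n}" "B \<in> \<Delta>" "C \<notin> \<Delta>"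
    by (auto simp: bier_pairs_def)
  from assms(1) have down_closed: "\<And>A D. A \<in> \<Delta> \<Longrightarrow> D \<subseteq> A \<Longrightarrow> D \<in> \<Delta>"
    by (auto simp: proper_ideal_def)
  have "{x} \<in> \<Delta>" if "x \<in> B" for x
    using down_closed[OF face(3)] that by auto
  moreover have "{1..n} - {x} \<notin> \<Delta>" if "x \<in> {1..n} - C" for x
    using down_closed[of "{1..n} - {x}" C] face that by auto
  ultimately have "?rhs \<subseteq> bier_vertices n \<Delta>"
    using face by (auto simp: bier_vertices_def)
  moreover have "v \<in> ?rhs" if "v \<in> bier_vertices n \<Delta>" "fst v \<subseteq> B" "C \<subseteq> snd v" for v
  proof -
    from that(1) obtain x where x: "x \<in> {1..n}" "v = ({x}, {1..n}) \<or> v = ({}, {1..n} - {x})"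
      unfolding bier_vertices_def by blast
    moreover have "v = ({}, {1..n} - {x}) \<Longrightarrow> x \<notin> C"
      using that(3) by auto
    ultimately show ?thesis
      using that(2) by auto
  qed
  ultimately show ?thesis
    using face by (auto simp: bier_vertex_set_def)
qed

lemma bier_pairs_dual:
  assumes "self_dual n \<Delta>" and "(B, C) \<in> bier_pairs n \<Delta>"
  shows "({1..n} - C, {1..n} - B) \<in> bier_pairs n \<Delta>"
proof -
  from assms(2) have face: "B \<subset> C" "C \<subseteq> {1..n}" "B \<in> \<Delta>" "C \<notin> \<Delta>"
    by (auto simp: bier_pairs_def)
  have "{1..n} - C \<in> \<Delta>"
    using self_dualD[OF assms(1) face(2)] face(4) by simp
  moreover have "{1..n} - B \<notin> \<Delta>"
    using self_dualD[OF assms(1), of "{1..n} - B"] face by (simp add: double_diff)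
  ultimately show ?thesis
    using face by (auto simp: bier_pairs_def)
qed

lemma bier_antipode_image_vertex_set:
  assumes "proper_ideal n \<Delta>" and "self_dual n \<Delta>" and face: "(B, C) \<in> bier_pairs n \<Delta>"
  shows "bier_antipode n ` bier_vertex_set n \<Delta> (B, C) =
           bier_vertex_set n \<Delta> ({1..n} - C, {1..n} - B)"
proof -
  have "B \<subseteq> {1..n}"
    using face by (auto simp: bier_pairs_def)
  then have "{1..n} - ({1..n} - B) = B"
    by (rule double_diff) simp
  moreover have "bier_antipode n ` (\<lambda>x. ({x}, {1..n})) ` B = (\<lambda>x. ({}, {1..n} - {x})) ` B"
    unfolding image_image by (rule image_cong[OF refl bier_antipode_singleton])
  moreover have "bier_antipode n ` (\<lambda>x. ({}, {1..n} - {x})) ` ({1..n} - C) =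
      (\<lambda>x. ({x}, {1..n})) ` ({1..n} - C)"
    unfolding image_image by (rule image_cong[OF refl bier_antipode_cosingleton]) blast
  ultimately show ?thesis
    unfolding bier_vertex_set_eq[OF assms(1) face]
      bier_vertex_set_eq[OF assms(1) bier_pairs_dual[OF assms(2) face]] image_Un
    by (simp only: Un_commute)
qed

lemma bier_antipode_image_face:
  assumes "proper_ideal n \<Delta>" and "self_dual n \<Delta>" and "F \<in> bier_complex n \<Delta>"
  shows "bier_antipode n ` F \<in> bier_complex n \<Delta>"
proof -
  from assms(3) obtain B C where face: "(B, C) \<in> bier_pairs n \<Delta>"
    and F: "F = bier_vertex_set n \<Delta> (B, C)"
    unfolding bier_complex_def by auto
  show ?thesis
    unfolding F bier_antipode_image_vertex_set[OF assms(1,2) face] bier_complex_def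
    by (rule imageI[OF bier_pairs_dual[OF assms(2) face]])
qed

lemma antipodal_pair_not_face:
  "{({x}, {1..n}), ({}, {1..n} - {x})} \<notin> bier_complex n \<Delta>"
proof
  assume "{({x}, {1..n}), ({}, {1..n} - {x})} \<in> bier_complex n \<Delta>"
  then obtain B C where "(B, C) \<in> bier_pairs n \<Delta>"
    and "{({x}, {1..n}), ({}, {1..n} - {x})} = bier_vertex_set n \<Delta> (B, C)"
    unfolding bier_complex_def by auto
  then have "B \<subset> C" "({x}, {1..n}) \<in> bier_vertex_set n \<Delta> (B, C)"
    "({}, {1..n} - {x}) \<in> bier_vertex_set n \<Delta> (B, C)"
    by (auto simp: bier_pairs_def)
  then have "B \<subset> C" "x \<in> B" "C \<subseteq> {1..n} - {x}"
    by (auto simp: bier_vertex_set_def)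
  then show False
    by auto
qed

lemma bier_antipode_edge_not_face:
  assumes "self_dual n \<Delta>" and "v \<in> bier_vertices n \<Delta>"
  shows "{v, bier_antipode n v} \<notin> bier_complex n \<Delta>"
proof -
  from assms obtain x where x: "x \<in> {1..n}"
    and v: "v = ({x}, {1..n}) \<or> v = ({}, {1..n} - {x})"
    unfolding bier_vertices_self_dual[OF assms(1)] by blast
  from v have "{v, bier_antipode n v} = {({x}, {1..n}), ({}, {1..n} - {x})}"
    by (elim disjE) (simp_all only: bier_antipode_singleton bier_antipode_cosingleton[OF x]
        insert_commute)
  then show ?thesis
    using antipodal_pair_not_face by simp
qed

theorem proposition15:
  fixes n :: nat and \<Delta> :: "nat set set"
  assumes "n \<ge> 2"
    and "proper_ideal n \<Delta>"
    and "\<forall>A. A \<subseteq> {1..n} \<longrightarrow> (A \<in> \<Delta> \<longleftrightarrow> {1..n} - A \<notin> \<Delta>)"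
  shows "\<exists>\<alpha>. centrally_symmetric_via (bier_vertices n \<Delta>) (bier_complex n \<Delta>) \<alpha>
           \<and> (\<forall>x\<in>{1..n}. {x} \<in> \<Delta> \<longrightarrow>
                 \<alpha> ({x}, {1..n}) = ({}, {1..n} - {x}) \<and> \<alpha> ({}, {1..n} - {x}) = ({x}, {1..n}))"
proof -
  have dual: "self_dual n \<Delta>"
    unfolding self_dual_def using assms(3) by blast
  have "centrally_symmetric_via (bier_vertices n \<Delta>) (bier_complex n \<Delta>) (bier_antipode n)"
    unfolding centrally_symmetric_via_def
    using bier_antipode_vertex[OF dual] bier_antipode_image_face[OF assms(2) dual]
      bier_antipode_edge_not_face[OF dual]
    by blast
  then show ?thesis
    using bier_antipode_singleton bier_antipode_cosingleton by blast
qed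

end
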